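(* Let $A$ be a Frobenius algebra over a field $\mathbb{k}$. Then $\dim_{\mathbb{k}}A=\operatorname{Frobdim}A$.
   Context: A Frobenius algebra over a field $\mathbb{k}$ is a finite-dimensional associative unital $\mathbb{k}$-algebra $A$ with a nondegenerate bilinear form $B:A\times A\to\mathbb{k}$ with $B(ab,c)=B(a,bc)$. The Frobenius space $\mathcal{E}_A$ is the $\mathbb{k}$-vector space of all $\mathbb{k}$-linear maps $\Delta:A\to A\otimes_{\mathbb{k}}A$ that are $A$-bimodule homomorphisms (with $a(x\otimes y)b=ax\otimes yb$), and $\operatorname{Frobdim}A=\dim_{\mathbb{k}}\mathcal{E}_A$. *)

theory Defs
  imports Main "HOL.Vector_Spaces" "HOL-Library.Function_Algebras"
begin

text \<open>A finite-dimensional k-vector space with a chosen basis indexed by the finite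
type 'n is represented as the coordinate space 'n => 'k.  The tensor product A (x)_k A of coordinate
spaces is represented as the coordinate space ('n * 'n) => 'k, with pure tensors
x (x) y given by (i,j) |-> x_i * y_j.\<close>

definition scalev :: "'k::field \<Rightarrow> ('n \<Rightarrow> 'k) \<Rightarrow> ('n \<Rightarrow> 'k)" where
  "scalev c x = (\<lambda>i. c * x i)"

definition unitv :: "'n \<Rightarrow> ('n \<Rightarrow> 'k::field)" where
  "unitv p = (\<lambda>i. if i = p then 1 else 0)"

definition tensor :: "('n \<Rightarrow> 'k::field) \<Rightarrow> ('n \<Rightarrow> 'k) \<Rightarrow> ('n \<times> 'n \<Rightarrow> 'k)" where
  "tensor x y = (\<lambda>(i, j). x i * y j)"

definition frobenius_algebra ::
  "(('n::finite \<Rightarrow> 'k::field) \<Rightarrow> ('n \<Rightarrow> 'k) \<Rightarrow> ('n \<Rightarrow> 'k)) \<Rightarrow>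
   (('n \<Rightarrow> 'k) \<Rightarrow> ('n \<Rightarrow> 'k) \<Rightarrow> 'k) \<Rightarrow> bool" where
  "frobenius_algebra mul B \<longleftrightarrow>
     \<comment> \<open>k-bilinear multiplication\<close>
     (\<forall>x y z. mul (x + y) z = mul x z + mul y z) \<and>
     (\<forall>x y z. mul x (y + z) = mul x y + mul x z) \<and>
     (\<forall>c x y. mul (scalev c x) y = scalev c (mul x y)) \<and>
     (\<forall>c x y. mul x (scalev c y) = scalev c (mul x y)) \<and>
     \<comment> \<open>associative and unital\<close>
     (\<forall>x y z. mul (mul x y) z = mul x (mul y z)) \<and>
     (\<exists>u. \<forall>x. mul u x = x \<and> mul x u = x) \<and>
     \<comment> \<open>B bilinear\<close>
     (\<forall>x y z. B (x + y) z = B x z + B y z) \<and>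
     (\<forall>x y z. B x (y + z) = B x y + B x z) \<and>
     (\<forall>c x y. B (scalev c x) y = c * B x y) \<and>
     (\<forall>c x y. B x (scalev c y) = c * B x y) \<and>
     \<comment> \<open>nondegenerate\<close>
     (\<forall>x. (\<forall>y. B x y = 0) \<longrightarrow> x = 0) \<and>
     (\<forall>y. (\<forall>x. B x y = 0) \<longrightarrow> y = 0) \<and>
     \<comment> \<open>associative (invariant)\<close>
     (\<forall>a b c. B (mul a b) c = B a (mul b c))"

text \<open>Left and right actions of A on A (x) A, extended linearly from
a (x (x) y) = (a x) (x) y and (x (x) y) b = x (x) (y b).\<close>
definition lact :: "(('n::finite \<Rightarrow> 'k::field) \<Rightarrow> ('n \<Rightarrow> 'k) \<Rightarrow> ('n \<Rightarrow> 'k)) \<Rightarrow>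
    ('n \<Rightarrow> 'k) \<Rightarrow> ('n \<times> 'n \<Rightarrow> 'k) \<Rightarrow> ('n \<times> 'n \<Rightarrow> 'k)" where
  "lact mul a T = (\<Sum>p\<in>UNIV. \<Sum>q\<in>UNIV. (\<lambda>ij. T (p, q) * tensor (mul a (unitv p)) (unitv q) ij))"

definition ract :: "(('n::finite \<Rightarrow> 'k::field) \<Rightarrow> ('n \<Rightarrow> 'k) \<Rightarrow> ('n \<Rightarrow> 'k)) \<Rightarrow>
    ('n \<times> 'n \<Rightarrow> 'k) \<Rightarrow> ('n \<Rightarrow> 'k) \<Rightarrow> ('n \<times> 'n \<Rightarrow> 'k)" where
  "ract mul T b = (\<Sum>p\<in>UNIV. \<Sum>q\<in>UNIV. (\<lambda>ij. T (p, q) * tensor (unitv p) (mul (unitv q) b) ij))"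

definition scalet :: "'k::field \<Rightarrow> ('n \<times> 'n \<Rightarrow> 'k) \<Rightarrow> ('n \<times> 'n \<Rightarrow> 'k)" where
  "scalet c T = (\<lambda>ij. c * T ij)"

definition scalemap :: "'k::field \<Rightarrow> (('n \<Rightarrow> 'k) \<Rightarrow> ('n \<times> 'n \<Rightarrow> 'k)) \<Rightarrow>
    (('n \<Rightarrow> 'k) \<Rightarrow> ('n \<times> 'n \<Rightarrow> 'k))" where
  "scalemap c D = (\<lambda>x. scalet c (D x))"

definition frob_space :: "(('n::finite \<Rightarrow> 'k::field) \<Rightarrow> ('n \<Rightarrow> 'k) \<Rightarrow> ('n \<Rightarrow> 'k)) \<Rightarrow>
    (('n \<Rightarrow> 'k) \<Rightarrow> ('n \<times> 'n \<Rightarrow> 'k)) set" where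
  "frob_space mul = {D. (\<forall>x y. D (x + y) = D x + D y) \<and> (\<forall>c x. D (scalev c x) = scalet c (D x)) \<and>
      (\<forall>a x. D (mul a x) = lact mul a (D x)) \<and>
      (\<forall>x b. D (mul x b) = ract mul (D x) b)}"

definition frobdim :: "(('n::finite \<Rightarrow> 'k::field) \<Rightarrow> ('n \<Rightarrow> 'k) \<Rightarrow> ('n \<Rightarrow> 'k)) \<Rightarrow> nat" where
  "frobdim mul = vector_space.dim scalemap (frob_space mul)"

end

theory Submission
  imports Defs
begin

(* Via the nondegenerate form, a tensor T in A (x) A corresponds to the endomorphism
   z |-> (id (x) B(-, z)) T of A, and the Casimir element  sum_r e_r (x) e^r  (e^r the dual
   basis) corresponds to the identity.  A bimodule map D : A -> A (x) A is determined by the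
   balanced tensor t = D 1, and by invariance of B the endomorphism attached to a balanced
   tensor commutes with all left multiplications, so it is right multiplication by some c.
   Hence D |-> c is a linear isomorphism from the Frobenius space onto A, with inverse
   c |-> (x |-> sum_r x e_r c (x) e^r). *)

lemma sum_apply: "(\<Sum>i\<in>S. f i) x = (\<Sum>i\<in>S. f i x)"
  by (induction S rule: infinite_finite_induct) auto

lemma unitv_coords: "(x :: 'n::finite \<Rightarrow> 'k::field) = (\<Sum>q\<in>UNIV. scalev (x q) (unitv q))"
  by (simp add: fun_eq_iff sum_apply scalev_def unitv_def if_distrib cong: if_cong)

lemma linear_form_coords:
  fixes g :: "('n::finite \<Rightarrow> 'k::field) \<Rightarrow> 'k"
  assumes "\<And>x y. g (x + y) = g x + g y" and "\<And>c x. g (scalev c x) = c * g x"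
  shows "g x = (\<Sum>q\<in>UNIV. x q * g (unitv q))"
proof -
  have "g 0 = 0"
    using assms(1)[of 0 0] by (metis add_cancel_left_right)
  then have "g (\<Sum>q\<in>UNIV. scalev (x q) (unitv q)) = (\<Sum>q\<in>UNIV. g (scalev (x q) (unitv q)))"
    by (metis (mono_tags) assms(1) comp_apply sum.cong sum_comp_morphism)
  then show ?thesis
    by (simp flip: unitv_coords add: assms(2))
qed

lemma vector_space_scalev: "vector_space (scalev :: 'k::field \<Rightarrow> ('n \<Rightarrow> 'k) \<Rightarrow> ('n \<Rightarrow> 'k))"
  by unfold_locales (auto simp: scalev_def algebra_simps)

lemma vector_space_scalemap:
  "vector_space (scalemap :: 'k::field \<Rightarrow> (('n \<Rightarrow> 'k) \<Rightarrow> ('n \<times> 'n \<Rightarrow> 'k)) \<Rightarrow> _)"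
  by unfold_locales (auto simp: scalemap_def scalet_def algebra_simps fun_eq_iff)

lemma finite_dimensional_vector_space_scalev:
  "finite_dimensional_vector_space (scalev :: 'k::field \<Rightarrow> ('n::finite \<Rightarrow> 'k) \<Rightarrow> ('n \<Rightarrow> 'k)) (range unitv)"
proof -
  interpret vector_space "scalev :: 'k \<Rightarrow> ('n \<Rightarrow> 'k) \<Rightarrow> ('n \<Rightarrow> 'k)"
    by (rule vector_space_scalev)
  have inj_unitv: "inj (unitv :: 'n \<Rightarrow> 'n \<Rightarrow> 'k)"
    by (rule injI) (metis unitv_def zero_neq_one)
  show ?thesis
  proof
    show "finite (range (unitv :: 'n \<Rightarrow> 'n \<Rightarrow> 'k))"
      by simp
    show "\<not> dependent (range (unitv :: 'n \<Rightarrow> 'n \<Rightarrow> 'k))"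
    proof
      assume "dependent (range (unitv :: 'n \<Rightarrow> 'n \<Rightarrow> 'k))"
      then obtain c i where ci: "c (unitv i) \<noteq> 0"
        and "(\<Sum>v\<in>range unitv. scalev (c v) v) = (0 :: 'n \<Rightarrow> 'k)"
        by (auto simp: dependent_finite)
      then have "(\<Sum>q\<in>UNIV. scalev (c (unitv q)) (unitv q :: 'n \<Rightarrow> 'k)) i = 0"
        by (simp add: sum.reindex[OF inj_unitv])
      then show False
        using ci by (simp add: sum_apply scalev_def unitv_def if_distrib[of "(*) _"] cong: if_cong)
    qed
    show "span (range (unitv :: 'n \<Rightarrow> 'n \<Rightarrow> 'k)) = UNIV"
    proof (intro set_eqI iffI UNIV_I)
      fix x :: "'n \<Rightarrow> 'k"
      show "x \<in> span (range unitv)"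
        by (subst unitv_coords) (intro span_sum span_scale span_base rangeI)
    qed
  qed
qed

lemma linear_scalev_iff:
  "Vector_Spaces.linear scalev scalev (f :: ('a \<Rightarrow> 'k::field) \<Rightarrow> ('b \<Rightarrow> 'k)) \<longleftrightarrow>
     (\<forall>x y. f (x + y) = f x + f y) \<and> (\<forall>c x. f (scalev c x) = scalev c (f x))"
  by (simp add: Vector_Spaces.linear_iff vector_space_scalev)

lemma linear_coords:
  fixes f :: "('n::finite \<Rightarrow> 'k::field) \<Rightarrow> ('m \<Rightarrow> 'k)"
  assumes "Vector_Spaces.linear scalev scalev f"
  shows "f x i = (\<Sum>q\<in>UNIV. x q * f (unitv q) i)"
  using assms by (intro linear_form_coords[where g = "\<lambda>x. f x i"]) (auto simp: linear_scalev_iff scalev_def)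

definition map_left :: "(('a \<Rightarrow> 'k) \<Rightarrow> ('c \<Rightarrow> 'k)) \<Rightarrow> ('a \<times> 'b \<Rightarrow> 'k) \<Rightarrow> ('c \<times> 'b \<Rightarrow> 'k)" where
  "map_left f T = (\<lambda>(i, j). f (\<lambda>p. T (p, j)) i)"

definition map_right :: "(('b \<Rightarrow> 'k) \<Rightarrow> ('c \<Rightarrow> 'k)) \<Rightarrow> ('a \<times> 'b \<Rightarrow> 'k) \<Rightarrow> ('a \<times> 'c \<Rightarrow> 'k)" where
  "map_right g T = (\<lambda>(i, j). g (\<lambda>q. T (i, q)) j)"

lemma map_left_comp: "map_left f (map_left g T) = map_left (f \<circ> g) T"
  by (simp add: map_left_def fun_eq_iff)

lemma map_left_add: "map_left (\<lambda>y. f y + g y) T = map_left f T + map_left g T"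
  by (simp add: map_left_def fun_eq_iff)

lemma map_left_scale: "map_left (\<lambda>y. scalev c (f y)) T = scalet c (map_left f T)"
  by (simp add: map_left_def scalev_def scalet_def fun_eq_iff)

lemma map_left_coords:
  fixes f :: "('a::finite \<Rightarrow> 'k::field) \<Rightarrow> ('c \<Rightarrow> 'k)"
  assumes "Vector_Spaces.linear scalev scalev f"
  shows "map_left f T (i, j) = (\<Sum>p\<in>UNIV. T (p, j) * f (unitv p) i)"
  using linear_coords[OF assms, of "\<lambda>p. T (p, j)" i] by (simp add: map_left_def)

lemma map_right_coords:
  fixes g :: "('b::finite \<Rightarrow> 'k::field) \<Rightarrow> ('c \<Rightarrow> 'k)"
  assumes "Vector_Spaces.linear scalev scalev g"
  shows "map_right g T (i, j) = (\<Sum>q\<in>UNIV. T (i, q) * g (unitv q) j)"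
  using linear_coords[OF assms, of "\<lambda>q. T (i, q)" j] by (simp add: map_right_def)

lemma map_left_map_right:
  fixes f :: "('a::finite \<Rightarrow> 'k::field) \<Rightarrow> ('c \<Rightarrow> 'k)" and g :: "('b::finite \<Rightarrow> 'k) \<Rightarrow> ('d \<Rightarrow> 'k)"
  assumes f: "Vector_Spaces.linear scalev scalev f" and g: "Vector_Spaces.linear scalev scalev g"
  shows "map_left f (map_right g T) = map_right g (map_left f T)"
proof (rule ext, clarify)
  fix i j
  have "map_left f (map_right g T) (i, j) = (\<Sum>p\<in>UNIV. \<Sum>q\<in>UNIV. T (p, q) * g (unitv q) j * f (unitv p) i)"
    by (simp add: map_left_coords[OF f] map_right_coords[OF g] sum_distrib_right)
  also have "\<dots> = (\<Sum>q\<in>UNIV. \<Sum>p\<in>UNIV. T (p, q) * f (unitv p) i * g (unitv q) j)"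
    by (rule sum.swap[THEN trans]) (simp add: mult_ac)
  also have "\<dots> = map_right g (map_left f T) (i, j)"
    by (simp add: map_left_coords[OF f] map_right_coords[OF g] sum_distrib_right)
  finally show "map_left f (map_right g T) (i, j) = map_right g (map_left f T) (i, j)" .
qed

lemma lact_eq_map_left:
  assumes "Vector_Spaces.linear scalev scalev (mul a)"
  shows "lact mul a T = map_left (mul a) T"
proof (rule ext, clarify)
  fix i j
  have "lact mul a T (i, j) = (\<Sum>p\<in>UNIV. T (p, j) * mul a (unitv p) i)"
    by (simp add: lact_def sum_apply tensor_def unitv_def if_distrib[of "(*) _"] cong: if_cong)
  also have "\<dots> = map_left (mul a) T (i, j)"
    by (simp add: map_left_coords[OF assms])
  finally show "lact mul a T (i, j) = map_left (mul a) T (i, j)" .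
qed

lemma ract_eq_map_right:
  assumes "Vector_Spaces.linear scalev scalev (\<lambda>x. mul x b)"
  shows "ract mul T b = map_right (\<lambda>x. mul x b) T"
proof (rule ext, clarify)
  fix i j
  have "ract mul T b (i, j) = (\<Sum>p\<in>UNIV. if p = i then \<Sum>q\<in>UNIV. T (p, q) * mul (unitv q) b j else 0)"
    unfolding ract_def sum_apply by (rule sum.cong) (auto simp: tensor_def unitv_def)
  also have "\<dots> = map_right (\<lambda>x. mul x b) T (i, j)"
    by (simp add: map_right_coords[OF assms])
  finally show "ract mul T b (i, j) = map_right (\<lambda>x. mul x b) T (i, j)" .
qed

locale frobenius =
  fixes mul :: "('n::finite \<Rightarrow> 'k::field) \<Rightarrow> ('n \<Rightarrow> 'k) \<Rightarrow> ('n \<Rightarrow> 'k)"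
    and B :: "('n \<Rightarrow> 'k) \<Rightarrow> ('n \<Rightarrow> 'k) \<Rightarrow> 'k"
  assumes frobenius_algebra: "frobenius_algebra mul B"
begin

lemma
  shows mul_add_left: "mul (x + y) z = mul x z + mul y z"
    and mul_add_right: "mul x (y + z) = mul x y + mul x z"
    and mul_scale_left: "mul (scalev c x) y = scalev c (mul x y)"
    and mul_scale_right: "mul x (scalev c y) = scalev c (mul x y)"
    and mul_assoc: "mul (mul x y) z = mul x (mul y z)"
    and form_add_left: "B (x + y) z = B x z + B y z"
    and form_add_right: "B x (y + z) = B x y + B x z"
    and form_scale_left: "B (scalev c x) y = c * B x y"
    and form_scale_right: "B x (scalev c y) = c * B x y"
    and form_mul_assoc: "B (mul x y) z = B x (mul y z)"
  using frobenius_algebra by (simp_all add: frobenius_algebra_def)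

lemma form_nondegenerate_left: "(\<And>y. B x y = 0) \<Longrightarrow> x = 0"
  using frobenius_algebra by (simp add: frobenius_algebra_def)

definition one :: "'n \<Rightarrow> 'k" where
  "one = (SOME u. \<forall>x. mul u x = x \<and> mul x u = x)"

lemma mul_one [simp]: "mul one x = x" "mul x one = x"
proof -
  have "\<exists>u. \<forall>x. mul u x = x \<and> mul x u = x"
    using frobenius_algebra by (simp add: frobenius_algebra_def)
  then have "\<forall>x. mul one x = x \<and> mul x one = x"
    unfolding one_def by (rule someI_ex)
  then show "mul one x = x" "mul x one = x"
    by auto
qed

lemma linear_mul_left: "Vector_Spaces.linear scalev scalev (mul a)"
  by (simp add: linear_scalev_iff mul_add_right mul_scale_right)

lemma linear_mul_right: "Vector_Spaces.linear scalev scalev (\<lambda>x. mul x b)"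
  by (simp add: linear_scalev_iff mul_add_left mul_scale_left)

lemma form_coords_right: "B x z = (\<Sum>q\<in>UNIV. z q * B x (unitv q))"
  by (rule linear_form_coords[where g = "B x"]) (simp_all add: form_add_right form_scale_right)

lemma form_sum_left: "B (\<Sum>p\<in>S. g p) z = (\<Sum>p\<in>S. B (g p) z)"
proof -
  have "B 0 z = 0"
    using form_add_left[of 0 0 z] by (metis add_cancel_left_right)
  then show ?thesis
    using sum_comp_morphism[of "\<lambda>x. B x z" g S] by (simp add: form_add_left comp_def)
qed

lemma form_eqI:
  assumes "\<And>z. B x z = B y z"
  shows "x = y"
proof -
  have "B (x - y) z = 0" for z
    using form_add_left[of "x - y" y z] assms[of z] by simp
  then show ?thesis
    using form_nondegenerate_left[of "x - y"] by simp
qed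

lemma ex_dual_basis: "\<exists>d. \<forall>r z. B (d r) z = z r"
proof -
  interpret finite_dimensional_vector_space "scalev :: 'k \<Rightarrow> ('n \<Rightarrow> 'k) \<Rightarrow> ('n \<Rightarrow> 'k)" "range unitv"
    by (rule finite_dimensional_vector_space_scalev)
  define R where "R y = (\<lambda>r. B y (unitv r))" for y
  have "R (x + y) = R x + R y" "R (scalev c x) = scalev c (R x)" for c x y
    unfolding R_def form_add_left form_scale_left by (simp_all add: scalev_def fun_eq_iff)
  then have "Vector_Spaces.linear scalev scalev R"
    by (simp add: linear_scalev_iff)
  moreover have "inj R"
  proof (rule injI)
    fix x y
    assume "R x = R y"
    then have "B x z = B y z" for z
      by (subst (1 2) form_coords_right) (simp add: R_def fun_eq_iff)
    then show "x = y"
      by (rule form_eqI)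
  qed
  ultimately have "surj R"
    by (rule linear_inj_imp_surj)
  have "B (inv R (unitv r)) z = z r" for r z
  proof -
    have "B (inv R (unitv r)) (unitv q) = unitv r q" for q
      using surj_f_inv_f[OF \<open>surj R\<close>, of "unitv r"] by (simp add: R_def fun_eq_iff)
    then show ?thesis
      by (subst form_coords_right) (simp add: unitv_def if_distrib[of "(*) _"] cong: if_cong)
  qed
  then show ?thesis
    by (intro exI[where x = "\<lambda>r. inv R (unitv r)"]) simp
qed

definition dual_basis :: "'n \<Rightarrow> 'n \<Rightarrow> 'k" where
  "dual_basis = (SOME d. \<forall>r z. B (d r) z = z r)"

lemma form_dual_basis: "B (dual_basis r) z = z r"
  using someI_ex[OF ex_dual_basis] by (simp add: dual_basis_def)

definition casimir :: "'n \<times> 'n \<Rightarrow> 'k" where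
  "casimir = (\<Sum>r\<in>UNIV. tensor (unitv r) (dual_basis r))"

lemma casimir_apply: "casimir (i, j) = dual_basis i j"
  by (simp add: casimir_def sum_apply tensor_def unitv_def if_distrib[of "\<lambda>x. x * _"] cong: if_cong)

text \<open>The endomorphism \<open>z \<mapsto> \<Sum> x B(y, z)\<close> attached to \<open>T = \<Sum> x \<otimes> y\<close>.\<close>

definition contract :: "('n \<times> 'n \<Rightarrow> 'k) \<Rightarrow> ('n \<Rightarrow> 'k) \<Rightarrow> ('n \<Rightarrow> 'k)" where
  "contract T z = (\<lambda>i. B (\<lambda>j. T (i, j)) z)"

lemma contract_casimir: "contract casimir z = z"
  by (simp add: contract_def casimir_apply form_dual_basis)

lemma linear_contract: "Vector_Spaces.linear scalev scalev (contract T)"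
proof -
  have "contract T (x + y) = contract T x + contract T y" "contract T (scalev c x) = scalev c (contract T x)"
    for c x y
    unfolding contract_def form_add_right form_scale_right by (simp_all add: scalev_def fun_eq_iff)
  then show ?thesis
    by (simp add: linear_scalev_iff)
qed

lemma contract_inject:
  assumes "contract T = contract T'"
  shows "T = T'"
proof (rule ext, clarify)
  fix i j
  have "B (\<lambda>j. T (i, j)) z = B (\<lambda>j. T' (i, j)) z" for z
    using assms by (simp add: contract_def fun_eq_iff)
  then have "(\<lambda>j. T (i, j)) = (\<lambda>j. T' (i, j))"
    by (rule form_eqI)
  then show "T (i, j) = T' (i, j)"
    by (rule fun_cong)
qed

lemma contract_map_left:
  assumes "Vector_Spaces.linear scalev scalev f"
  shows "contract (map_left f T) z = f (contract T z)"
proof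
  fix i
  have "(\<lambda>j. map_left f T (i, j)) = (\<Sum>p\<in>UNIV. scalev (f (unitv p) i) (\<lambda>j. T (p, j)))"
    by (simp add: map_left_coords[OF assms] sum_apply scalev_def fun_eq_iff mult.commute)
  then have "contract (map_left f T) z i = (\<Sum>p\<in>UNIV. contract T z p * f (unitv p) i)"
    by (simp add: contract_def form_sum_left form_scale_left mult.commute)
  also have "\<dots> = f (contract T z) i"
    by (rule linear_coords[OF assms, symmetric])
  finally show "contract (map_left f T) z i = f (contract T z) i" .
qed

lemma contract_map_right_mul: "contract (map_right (\<lambda>x. mul x a) T) z = contract T (mul a z)"
  by (simp add: contract_def map_right_def form_mul_assoc)

lemma map_left_contract_casimir: "map_left (contract T) casimir = T"
  by (rule contract_inject) (simp add: fun_eq_iff contract_map_left[OF linear_contract] contract_casimir)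

lemma casimir_balanced: "map_left (mul a) casimir = map_right (\<lambda>x. mul x a) casimir"
  by (rule contract_inject)
    (simp add: fun_eq_iff contract_map_left[OF linear_mul_left] contract_map_right_mul contract_casimir)

lemma balanced_tensor_eq:
  assumes "\<And>a. map_left (mul a) T = map_right (\<lambda>x. mul x a) T"
  shows "T = map_left (\<lambda>y. mul y (contract T one)) casimir"
proof -
  have "contract T (mul a z) = mul a (contract T z)" for a z
  proof -
    have "contract T (mul a z) = contract (map_right (\<lambda>x. mul x a) T) z"
      by (simp add: contract_map_right_mul)
    also have "\<dots> = mul a (contract T z)"
      by (simp add: assms[symmetric] contract_map_left[OF linear_mul_left])
    finally show ?thesis .
  qed
  then have "contract T = (\<lambda>y. mul y (contract T one))"
    by (metis mul_one(2))
  then show ?thesis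
    using map_left_contract_casimir by metis
qed

definition comult :: "('n \<Rightarrow> 'k) \<Rightarrow> ('n \<Rightarrow> 'k) \<Rightarrow> ('n \<times> 'n \<Rightarrow> 'k)" where
  "comult c x = map_left (\<lambda>y. mul (mul x y) c) casimir"

lemma linear_mul_mul: "Vector_Spaces.linear scalev scalev (\<lambda>y. mul (mul x y) c)"
  using Vector_Spaces.linear_compose[OF linear_mul_left linear_mul_right] by (simp add: comp_def)

lemma comult_in_frob_space: "comult c \<in> frob_space mul"
  unfolding frob_space_def
proof (intro CollectI conjI allI)
  fix x y
  show "comult c (x + y) = comult c x + comult c y"
    by (simp add: comult_def mul_add_left map_left_add)
next
  fix a x
  show "comult c (scalev a x) = scalet a (comult c x)"
    by (simp add: comult_def mul_scale_left map_left_scale)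
next
  fix a x
  show "comult c (mul a x) = lact mul a (comult c x)"
    by (simp add: comult_def lact_eq_map_left[OF linear_mul_left] map_left_comp comp_def mul_assoc)
next
  fix x b
  have "comult c (mul x b) = map_left (\<lambda>y. mul (mul x y) c) (map_left (mul b) casimir)"
    by (simp add: comult_def map_left_comp comp_def mul_assoc)
  also have "\<dots> = map_right (\<lambda>w. mul w b) (comult c x)"
    by (simp add: casimir_balanced comult_def map_left_map_right[OF linear_mul_mul linear_mul_right])
  finally show "comult c (mul x b) = ract mul (comult c x) b"
    by (simp add: ract_eq_map_right[OF linear_mul_right])
qed

lemma frob_space_eq_comult:
  assumes "D \<in> frob_space mul"
  shows "D = comult (contract (D one) one)"
proof -
  have "D (mul a x) = lact mul a (D x)" "D (mul x a) = ract mul (D x) a" for a x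
    using assms unfolding frob_space_def by blast+
  then have D_left: "D (mul a x) = map_left (mul a) (D x)"
    and D_right: "D (mul x a) = map_right (\<lambda>w. mul w a) (D x)" for a x
    by (simp_all add: lact_eq_map_left[OF linear_mul_left] ract_eq_map_right[OF linear_mul_right])
  have "map_left (mul a) (D one) = map_right (\<lambda>w. mul w a) (D one)" for a
    using D_left[of a one] D_right[of one a] by simp
  then have D_one: "D one = map_left (\<lambda>y. mul y (contract (D one) one)) casimir"
    by (rule balanced_tensor_eq)
  have "D x = comult (contract (D one) one) x" for x
  proof -
    have "D x = map_left (mul x) (D one)"
      using D_left[of x one] by simp
    also have "\<dots> = comult (contract (D one) one) x"
      by (subst D_one) (simp add: comult_def map_left_comp comp_def mul_assoc)
    finally show ?thesis .
  qed
  then show ?thesis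
    by blast
qed

lemma contract_comult_one: "contract (comult c one) one = c"
  using contract_map_left[OF linear_mul_right, where T = casimir and z = one]
  by (simp add: comult_def contract_casimir)

lemma inj_comult: "inj comult"
  by (metis injI contract_comult_one)

lemma range_comult: "range comult = frob_space mul"
  using comult_in_frob_space frob_space_eq_comult by blast

lemma linear_comult: "Vector_Spaces.linear scalev scalemap comult"
  by (simp add: Vector_Spaces.linear_iff vector_space_scalev vector_space_scalemap fun_eq_iff comult_def
      scalemap_def mul_add_right mul_scale_right map_left_add map_left_scale)

end

theorem corollary9:
  fixes mul :: "('n::finite \<Rightarrow> 'k::field) \<Rightarrow> ('n \<Rightarrow> 'k) \<Rightarrow> ('n \<Rightarrow> 'k)"
    and B :: "('n \<Rightarrow> 'k) \<Rightarrow> ('n \<Rightarrow> 'k) \<Rightarrow> 'k"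
  assumes "frobenius_algebra mul B"
  shows "vector_space.dim (scalev :: 'k \<Rightarrow> ('n \<Rightarrow> 'k) \<Rightarrow> ('n \<Rightarrow> 'k)) UNIV = frobdim mul"
proof -
  interpret frobenius mul B
    by (rule frobenius.intro) (fact assms)
  interpret dims: finite_dimensional_vector_space_pair_1
      "scalev :: 'k \<Rightarrow> ('n \<Rightarrow> 'k) \<Rightarrow> ('n \<Rightarrow> 'k)" "range unitv"
      "scalemap :: 'k \<Rightarrow> (('n \<Rightarrow> 'k) \<Rightarrow> ('n \<times> 'n \<Rightarrow> 'k)) \<Rightarrow> _"
    by (simp add: finite_dimensional_vector_space_pair_1_def finite_dimensional_vector_space_scalev
        vector_space_scalemap)
  have "dims.vs2.dim (range comult) = dims.vs1.dim UNIV"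
    by (rule dims.dim_image_eq[OF linear_comult]) (simp add: inj_comult)
  then show ?thesis
    by (simp add: frobdim_def range_comult)
qed

end
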